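(* Let $d\ge 2$ and let $H$ be the class of decision trees of height at most $d$ over $\mathrm{dim}$-dimensional inputs in which nodes are permitted to test the same dimension as their ancestors. Then for any dataset of $n$ distinct points, the disagreement coefficient of $H$ satisfies $\theta=\Omega(n^{1/\mathrm{dim}})$.
   Context: A decision tree routes a point $x\in\mathbb{R}^{\mathrm{dim}}$ from the root; each internal node compares one coordinate $x_a$ with a threshold, each leaf carries a label in $\{0,1\}$. For a dataset $S$ of $n$ points: $D_S(h,h')=\frac1n\sum_{x\in S}\mathbb{I}(h(x)\ne h'(x))$, $B_H(h,r)=\{h'\in H:D_S(h,h')\le r\}$, $\mathrm{DIS}_S(V)=\{x\in S:\exists h_1,h_2\in V,h_1(x)\ne h_2(x)\}$, $\theta_h=\sup_{r>0}\frac{|\mathrm{DIS}_S(B_H(h,r))|}{rn}$, $\theta=\sup_{h\in H}\theta_h$. *)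

theory Defs
  imports "HOL-Analysis.Analysis"
begin

text \<open>Axis-aligned decision trees over inputs in real^'n (dimension = CARD('n)). No restriction on which
  coordinates are tested, so a node may test the same coordinate as an ancestor.\<close>

datatype 'n dtree = Leaf bool | Node 'n real "'n dtree" "'n dtree"

fun dt_eval :: "'n dtree \<Rightarrow> real^'n \<Rightarrow> bool" where
  "dt_eval (Leaf b) x = b"
| "dt_eval (Node a t l r) x = (if x $ a \<le> t then dt_eval l x else dt_eval r x)"

fun dt_height :: "'n dtree \<Rightarrow> nat" where
  "dt_height (Leaf b) = 0"
| "dt_height (Node a t l r) = Suc (max (dt_height l) (dt_height r))"

definition DT_class :: "nat \<Rightarrow> (real^'n \<Rightarrow> bool) set" where
  "DT_class d = {dt_eval T | T. dt_height T \<le> d}"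

definition emp_dist :: "'a set \<Rightarrow> ('a \<Rightarrow> bool) \<Rightarrow> ('a \<Rightarrow> bool) \<Rightarrow> real" where
  "emp_dist S h h' = real (card {x\<in>S. h x \<noteq> h' x}) / real (card S)"

definition emp_ball :: "('a \<Rightarrow> bool) set \<Rightarrow> 'a set \<Rightarrow> ('a \<Rightarrow> bool) \<Rightarrow> real \<Rightarrow> ('a \<Rightarrow> bool) set" where
  "emp_ball H S h r = {h'\<in>H. emp_dist S h h' \<le> r}"

definition DIS :: "'a set \<Rightarrow> ('a \<Rightarrow> bool) set \<Rightarrow> 'a set" where
  "DIS S V = {x\<in>S. \<exists>h1\<in>V. \<exists>h2\<in>V. h1 x \<noteq> h2 x}"

definition dis_coeff_at :: "('a \<Rightarrow> bool) set \<Rightarrow> 'a set \<Rightarrow> ('a \<Rightarrow> bool) \<Rightarrow> real" where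
  "dis_coeff_at H S h =
     (SUP r\<in>{0<..}. real (card (DIS S (emp_ball H S h r))) / (r * real (card S)))"

definition dis_coeff :: "('a \<Rightarrow> bool) set \<Rightarrow> 'a set \<Rightarrow> real" where
  "dis_coeff H S = (SUP h\<in>H. dis_coeff_at H S h)"

end

theory Submission imports Defs begin

text \<open>Centre the ball at the constant classifier False. If at most k points of S share the
  i-th coordinate of p, a height-2 tree with two thresholds on coordinate i accepts, among the
  points of S, exactly these; so it lies in the ball of radius k/n and disagrees with the centre
  at p. Hence the disagreement region contains every point with some coordinate value shared by
  at most k points. Each remaining point has all its dim coordinate values among the at most
  n/(k+1) values occurring more than k times, so there are at most (n/(k+1))^dim of them. For
  k about 2 n^(1-1/dim) this is at most n/2, so the disagreement coefficient is at least (n/2)/k,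
  which is of order n^(1/dim).\<close>

lemma DIS_memberI:
  assumes "x \<in> S" "f \<in> V" "g \<in> V" "f x \<noteq> g x"
  shows "x \<in> DIS S V"
  using assms unfolding DIS_def by blast

lemma DIS_nonempty_imp_radius_ge:
  assumes "finite S" "DIS S (emp_ball H S h r) \<noteq> {}"
  shows "1 \<le> r * real (card S)"
proof -
  obtain x h1 h2 where x: "x \<in> S" and "h1 \<in> emp_ball H S h r" "h2 \<in> emp_ball H S h r"
    "h1 x \<noteq> h2 x"
    using assms(2) unfolding DIS_def by blast
  then obtain g where g: "g \<in> emp_ball H S h r" "g x \<noteq> h x" by metis
  have "0 < card {y\<in>S. h y \<noteq> g y}" using assms(1) x g(2) by (auto simp: card_gt_0_iff)
  moreover have "real (card {y\<in>S. h y \<noteq> g y}) / real (card S) \<le> r"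
    using g(1) unfolding emp_ball_def emp_dist_def by auto
  moreover have "0 < card S" using assms(1) x card_gt_0_iff by blast
  ultimately show ?thesis by (simp add: pos_divide_le_eq)
qed

lemma DIS_ratio_le_card:
  assumes "finite S" "r > 0"
  shows "real (card (DIS S (emp_ball H S h r))) / (r * real (card S)) \<le> real (card S)"
proof (cases "DIS S (emp_ball H S h r) = {}")
  case False
  let ?D = "DIS S (emp_ball H S h r)"
  have "1 \<le> r * real (card S)" by (rule DIS_nonempty_imp_radius_ge[OF assms(1) False])
  then have "real (card ?D) / (r * real (card S)) \<le> real (card ?D) / 1"
    by (intro divide_left_mono) auto
  also have "\<dots> \<le> real (card S)"
    using card_mono[OF assms(1), of ?D] by (auto simp: DIS_def)
  finally show ?thesis .
qed simp

lemma dis_coeff_at_le_card: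
  assumes "finite S" "S \<noteq> {}"
  shows "dis_coeff_at H S h \<le> real (card S)"
  unfolding dis_coeff_at_def using assms(2)
  by (intro cSUP_least) (auto intro: DIS_ratio_le_card[OF assms(1)])

lemma DIS_ratio_le_dis_coeff:
  assumes "finite S" "S \<noteq> {}" "h \<in> H" "r > 0"
  shows "real (card (DIS S (emp_ball H S h r))) / (r * real (card S)) \<le> dis_coeff H S"
proof -
  have "real (card (DIS S (emp_ball H S h r))) / (r * real (card S)) \<le> dis_coeff_at H S h"
    unfolding dis_coeff_at_def
    by (rule cSUP_upper, use assms in simp)
      (rule bdd_aboveI[where M="real (card S)"], use assms in \<open>auto intro: DIS_ratio_le_card\<close>)
  also have "\<dots> \<le> dis_coeff H S"
    unfolding dis_coeff_def
    by (rule cSUP_upper[OF assms(3)], rule bdd_aboveI[where M="real (card S)"])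
      (auto simp: dis_coeff_at_le_card[OF assms(1,2)])
  finally show ?thesis .
qed

lemma card_large_fibres_mult_le:
  assumes "finite S"
  shows "card {v \<in> f ` S. k < card {q\<in>S. f q = v}} * (k + 1) \<le> card S"
proof -
  let ?V = "{v \<in> f ` S. k < card {q\<in>S. f q = v}}"
  have "card ?V * (k + 1) = (\<Sum>v\<in>?V. k + 1)" by simp
  also have "\<dots> \<le> (\<Sum>v\<in>?V. card {q\<in>S. f q = v})"
    by (rule sum_mono) auto
  also have "\<dots> = card (\<Union>v\<in>?V. {q\<in>S. f q = v})"
    by (rule card_UN_disjoint[symmetric]) (use assms in auto)
  also have "\<dots> \<le> card S" by (rule card_mono[OF assms]) auto
  finally show ?thesis .
qed

definition crowded_points :: "('a^'n) set \<Rightarrow> nat \<Rightarrow> ('a^'n) set" where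
  "crowded_points S k = {p\<in>S. \<forall>a. k < card {q\<in>S. q$a = p$a}}"

lemma card_crowded_points_le:
  fixes S :: "('a^'n) set"
  assumes "finite S"
  shows "real (card (crowded_points S k)) \<le> (real (card S) / real (k + 1)) ^ CARD('n)"
proof -
  define V where "V a = {v \<in> (\<lambda>q. q$a) ` S. k < card {q\<in>S. q$a = v}}" for a
  have finV: "finite (V a)" for a using assms unfolding V_def by auto
  have "vec_nth ` crowded_points S k \<subseteq> PiE UNIV V"
    unfolding crowded_points_def V_def by (auto simp: PiE_def extensional_def)
  then have "card (crowded_points S k) \<le> card (PiE UNIV V)"
    by (intro card_inj_on_le) (auto intro!: inj_onI finite_PiE finV simp: vec_eq_iff)
  also have "\<dots> = (\<Prod>a\<in>UNIV. card (V a))" by (simp add: card_PiE)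
  finally have "real (card (crowded_points S k)) \<le> (\<Prod>a\<in>UNIV. real (card (V a)))"
    by (metis of_nat_le_iff of_nat_prod)
  also have "\<dots> \<le> (\<Prod>a\<in>(UNIV::'n set). real (card S) / real (k + 1))"
  proof (rule prod_mono)
    fix a
    have "card (V a) * (k + 1) \<le> card S"
      unfolding V_def by (rule card_large_fibres_mult_le[OF assms])
    then have "real (card (V a)) * real (k + 1) \<le> real (card S)"
      by (metis of_nat_le_iff of_nat_mult)
    then show "0 \<le> real (card (V a)) \<and> real (card (V a)) \<le> real (card S) / real (k + 1)"
      by (simp add: pos_le_divide_eq)
  qed
  finally show ?thesis by simp
qed

lemma dt_eval_in_DT_class: "dt_height T \<le> d \<Longrightarrow> dt_eval T \<in> DT_class d"
  unfolding DT_class_def by blast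

lemma constant_False_in_DT_class: "(\<lambda>_. False) \<in> (DT_class d :: (real^'n \<Rightarrow> bool) set)"
proof -
  have "dt_eval (Leaf False :: 'n dtree) \<in> DT_class d" by (rule dt_eval_in_DT_class) simp
  moreover have "dt_eval (Leaf False :: 'n dtree) = (\<lambda>_. False)" by auto
  ultimately show ?thesis by simp
qed

lemma slab_tree_exists:
  fixes S :: "(real^'n) set"
  assumes "finite S"
  obtains T where "dt_height T = 2" "dt_eval T p" "\<And>q. q \<in> S \<Longrightarrow> dt_eval T q \<longleftrightarrow> q$a = p$a"
proof -
  let ?below = "{q$a | q. q \<in> S \<and> q$a < p$a}"
  define t where "t = (if ?below = {} then p$a - 1 else Max ?below)"
  have fin: "finite ?below" using assms by simp
  have t_less: "t < p$a" unfolding t_def using fin by auto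
  have le_t: "q$a \<le> t" if "q \<in> S" "q$a < p$a" for q
    unfolding t_def using fin that by (auto intro!: Max_ge)
  define T where "T = Node a (p$a) (Node a t (Leaf False) (Leaf True)) (Leaf False)"
  have eval: "dt_eval T x \<longleftrightarrow> t < x$a \<and> x$a \<le> p$a" for x unfolding T_def by auto
  show ?thesis
  proof
    show "dt_height T = 2" unfolding T_def by simp
    show "dt_eval T p" using t_less eval by simp
    show "dt_eval T q \<longleftrightarrow> q$a = p$a" if "q \<in> S" for q
      using t_less le_t[OF that] unfolding eval by (cases "q$a < p$a") auto
  qed
qed

lemma uncrowded_points_subset_DIS:
  fixes S :: "(real^'n) set"
  assumes "finite S" "2 \<le> d"
  shows "S - crowded_points S k
           \<subseteq> DIS S (emp_ball (DT_class d) S (\<lambda>_. False) (real k / real (card S)))"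
proof
  let ?B = "emp_ball (DT_class d) S (\<lambda>_. False) (real k / real (card S))"
  fix p assume p: "p \<in> S - crowded_points S k"
  then have "\<not> (\<forall>i. k < card {q\<in>S. q$i = p$i})" unfolding crowded_points_def by blast
  then obtain i where sparse: "card {q\<in>S. q$i = p$i} \<le> k" by (auto simp: not_less)
  obtain T where T: "dt_height T = 2" "dt_eval T p"
    "\<And>q. q \<in> S \<Longrightarrow> dt_eval T q \<longleftrightarrow> q$i = p$i"
    using slab_tree_exists[OF assms(1), of p i] by metis
  have "{x\<in>S. False \<noteq> dt_eval T x} = {q\<in>S. q$i = p$i}" using T(3) by auto
  then have "emp_dist S (\<lambda>_. False) (dt_eval T) \<le> real k / real (card S)"
    unfolding emp_dist_def using sparse by (simp add: divide_right_mono)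
  moreover have "dt_eval T \<in> DT_class d" using T(1) assms(2) by (simp add: dt_eval_in_DT_class)
  ultimately have "dt_eval T \<in> ?B" unfolding emp_ball_def by blast
  moreover have "(\<lambda>_. False) \<in> ?B"
    unfolding emp_ball_def emp_dist_def using constant_False_in_DT_class by simp
  ultimately show "p \<in> DIS S ?B"
    using p T(2) by (intro DIS_memberI[where f = "dt_eval T" and g = "\<lambda>_. False"]) auto
qed

lemma card_DIS_ge_uncrowded:
  fixes S :: "(real^'n) set"
  assumes "finite S" "2 \<le> d"
  shows "real (card S) - (real (card S) / real (k + 1)) ^ CARD('n)
           \<le> real (card (DIS S (emp_ball (DT_class d) S (\<lambda>_. False) (real k / real (card S)))))"
proof -
  have "card (S - crowded_points S k)
          \<le> card (DIS S (emp_ball (DT_class d) S (\<lambda>_. False) (real k / real (card S))))"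
    by (rule card_mono) (use uncrowded_points_subset_DIS[OF assms] assms(1) in \<open>auto simp: DIS_def\<close>)
  moreover have "crowded_points S k \<subseteq> S" unfolding crowded_points_def by auto
  then have "real (card (S - crowded_points S k)) = real (card S) - real (card (crowded_points S k))"
    using assms(1) by (simp add: card_Diff_subset card_mono finite_subset)
  ultimately show ?thesis using card_crowded_points_le[OF assms(1), of k] by linarith
qed

lemma crowding_threshold_exists:
  fixes n :: real and D :: nat
  assumes n: "1 \<le> n" and D: "1 \<le> D"
  obtains k :: nat
    where "0 < k" "(n / real (k + 1)) ^ D \<le> n / 2" "n powr (1 / real D) / 6 \<le> n / (2 * real k)"
proof -
  define m where "m = n powr (1 / real D)"
  define k where "k = nat \<lceil>2 * n / m\<rceil>"
  have m1: "1 \<le> m" unfolding m_def using n by (simp add: ge_one_powr_ge_zero)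
  have mn: "m \<le> n" unfolding m_def using n D powr_mono[of "1 / real D" 1 n] by simp
  have mD: "m ^ D = n" unfolding m_def using n D by (simp add: powr_realpow[symmetric] powr_powr)
  have two: "2 \<le> 2 * n / m" using m1 mn by (simp add: field_simps)
  have k_ge: "2 * n / m \<le> real k" unfolding k_def by linarith
  have "1 \<le> n / m" using m1 mn by (simp add: field_simps)
  then have k_le: "real k \<le> 3 * n / m" unfolding k_def using two by linarith
  show ?thesis
  proof
    show "0 < k" using k_ge two by simp
    have "n / real (k + 1) \<le> n / (2 * n / m)"
      by (rule divide_left_mono) (use k_ge n m1 in auto)
    also have "\<dots> = m / 2" using n m1 by (simp add: field_simps)
    finally have "(n / real (k + 1)) ^ D \<le> (m / 2) ^ D"
      by (rule power_mono) (use n in simp)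
    also have "\<dots> = n / 2 ^ D" using mD by (simp add: power_divide)
    also have "\<dots> \<le> n / 2"
      by (rule divide_left_mono) (use n D in \<open>auto intro: power_increasing[of 1 D "2::real", simplified]\<close>)
    finally show "(n / real (k + 1)) ^ D \<le> n / 2" .
    have "m / 6 = n / (2 * (3 * n / m))" using n m1 by (simp add: field_simps)
    also have "\<dots> \<le> n / (2 * real k)"
      by (rule divide_left_mono) (use k_le k_ge two n m1 in auto)
    finally show "n powr (1 / real D) / 6 \<le> n / (2 * real k)" unfolding m_def .
  qed
qed

theorem theorem3:
  fixes d :: nat
  assumes "d \<ge> 2"
  shows "\<exists>c>0. \<exists>N::nat. \<forall>S :: (real^'n) set.
           finite S \<and> card S \<ge> N \<longrightarrow>
           dis_coeff (DT_class d :: (real^'n \<Rightarrow> bool) set) S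
             \<ge> c * real (card S) powr (1 / real CARD('n))"
proof (intro exI[of _ "1/6::real"] exI[of _ "1::nat"] conjI allI impI)
  fix S :: "(real^'n) set"
  assume S: "finite S \<and> 1 \<le> card S"
  define n where "n = real (card S)"
  have n1: "1 \<le> n" using S n_def by simp
  obtain k where k: "0 < k" "(n / real (k + 1)) ^ CARD('n) \<le> n / 2"
      "n powr (1 / real CARD('n)) / 6 \<le> n / (2 * real k)"
    using crowding_threshold_exists[OF n1, of "CARD('n)"] by (auto simp: Suc_le_eq)
  let ?DIS = "DIS S (emp_ball (DT_class d) S (\<lambda>_. False) (real k / n))"
  have "n / 2 \<le> real (card ?DIS)"
    using card_DIS_ge_uncrowded[OF conjunct1[OF S] assms, of k] k(2) unfolding n_def by linarith
  then have "n / 2 / real k \<le> real (card ?DIS) / real k" by (rule divide_right_mono) simp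
  then have "n / (2 * real k) \<le> real (card ?DIS) / (real k / n * n)" using n1 by simp
  also have "\<dots> \<le> dis_coeff (DT_class d) S"
    unfolding n_def
    by (rule DIS_ratio_le_dis_coeff) (use S k(1) constant_False_in_DT_class in auto)
  finally show "1/6 * real (card S) powr (1 / real CARD('n)) \<le> dis_coeff (DT_class d) S"
    using k(3) unfolding n_def by simp
qed simp

end
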